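(* Let $n\geq1$, $k\in\{1,\ldots,n\}$, $l\in\{1,\ldots,n\}$, and let $v=v_{l,\eta_k}+q(1,1)\in\mathbb N^2$ with $q\in\mathbb N$, $q\geq n-l+1+r_{l,\eta_k}$. Then $f_k(v)\geq f_k(u)$ for all $u\in T_{0,\eta_k}\cup\bigcup_{j=1}^l(T_{j,\eta_k}+r_{j,\eta_k}(1,1))$.
   Context: $f_k(v)=kv_1+(1-k)v_2$. $\Omega$ is the set of $\eta=(z,d_0,\ldots,d_r)$ with $z\in\{0,1\}$, $d_0=0$, $d_i\geq1$ ($1\leq i\leq r$), $\sum d_i=n$. For $j\in\{1,\ldots,n\}$, $t$ unique with $\sum_{i<t}d_i<j\leq\sum_{i\leq t}d_i$, $c=j-\sum_{i<t}d_i$; $v_{j,\eta}=(\sum_{i\text{ odd},i<t}d_i+c,0)$ if $z=1,t$ odd; $(0,\sum_{i\text{ even},i<t}d_i+c)$ if $z=1,t$ even; $(0,\sum_{i\text{ odd},i<t}d_i+c)$ if $z=0,t$ odd; $(\sum_{i\text{ even},i<t}d_i+c,0)$ if $z=0,t$ even. $T_{j,\eta}=\{v_{j,\eta}+p(1,1):0\leq p\leq n-j\}$, $T_{0,\eta}=\{(p,p):1\leq p\leq n\}$, $r_{j,\eta}=n\pi_2(v_{j,\eta})$, $T_{j,\eta}+r_{j,\eta}(1,1)=\{w+(r_{j,\eta},r_{j,\eta}):w\in T_{j,\eta}\}$. $\eta_k$: $z_k=1$ if $k\leq n+1-k$, else $0$; $d_{k,0}=0$; for $l\geq1$, $O_l=\sum_{j\text{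 odd},j\leq l-1}d_{k,j}$, $E_l=\sum_{j\text{ even},j\leq l-1}d_{k,j}$; $t_l=\max\{m\in\mathbb N:mk\leq(E_l+1)(n+1-k)\}$ ($z_k=1$, $l$ odd), $\max\{m:m(n+1-k)\leq(O_l+1)k\}$ ($z_k=1$, $l$ even), $\max\{m:m(n+1-k)\leq(E_l+1)k\}$ ($z_k=0$, $l$ odd), $\max\{m:mk\leq(O_l+1)(n+1-k)\}$ ($z_k=0$, $l$ even); $s_1=0$, $s_l=O_l$ (odd $l>1$), $s_l=E_l$ (even $l$); $d_{k,l}=\min\{n-\sum_{j<l}d_{k,j},t_l-s_l\}$, stopping at first $r$ with $\sum_{j\leq r}d_{k,j}=n$; $\eta_k=(z_k,d_{k,0},\ldots,d_{k,r})\in\Omega$. *)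

theory Defs
  imports Main
begin

text \<open>An element eta = (z, d_0, ..., d_r) of Omega is represented as a pair
  (z, [d_0, ..., d_r]) with z :: bool (True = 1, False = 0).\<close>

type_synonym eta = "bool \<times> nat list"

definition rr :: "eta \<Rightarrow> nat" where
  "rr \<eta> = length (snd \<eta>) - 1"

definition dd :: "eta \<Rightarrow> nat \<Rightarrow> nat" where
  "dd \<eta> i = snd \<eta> ! i"

definition Omega :: "nat \<Rightarrow> eta set" where
  "Omega n = {\<eta>. snd \<eta> \<noteq> [] \<and> dd \<eta> 0 = 0 \<and> (\<forall>i\<in>{1..rr \<eta>}. dd \<eta> i \<ge> 1)
                 \<and> (\<Sum>i\<le>rr \<eta>. dd \<eta> i) = n}"

definition tidx :: "eta \<Rightarrow> nat \<Rightarrow> nat" where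
  "tidx \<eta> j = (THE t. t \<le> rr \<eta> \<and> (\<Sum>i<t. dd \<eta> i) < j \<and> j \<le> (\<Sum>i\<le>t. dd \<eta> i))"

definition vv :: "eta \<Rightarrow> nat \<Rightarrow> nat \<times> nat" where
  "vv \<eta> j = (let t = tidx \<eta> j;
                  c = j - (\<Sum>i<t. dd \<eta> i);
                  Od = (\<Sum>i\<in>{i. i < t \<and> odd i}. dd \<eta> i);
                  Ev = (\<Sum>i\<in>{i. i < t \<and> even i}. dd \<eta> i)
              in if fst \<eta> then (if odd t then (Od + c, 0) else (0, Ev + c))
                 else (if odd t then (0, Od + c) else (Ev + c, 0)))"

definition TT :: "nat \<Rightarrow> eta \<Rightarrow> nat \<Rightarrow> (nat \<times> nat) set" where
  "TT n \<eta> j = {(fst (vv \<eta> j) + p, snd (vv \<eta> j) + p) | p. p \<le> n - j}"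

definition T0 :: "nat \<Rightarrow> (nat \<times> nat) set" where
  "T0 n = {(p, p) | p. 1 \<le> p \<and> p \<le> n}"

definition rv :: "nat \<Rightarrow> eta \<Rightarrow> nat \<Rightarrow> nat" where
  "rv n \<eta> j = n * snd (vv \<eta> j)"

definition shift :: "(nat \<times> nat) set \<Rightarrow> nat \<Rightarrow> (nat \<times> nat) set" where
  "shift A r = {(a + r, b + r) | a b. (a, b) \<in> A}"

definition fk :: "nat \<Rightarrow> nat \<times> nat \<Rightarrow> int" where
  "fk k v = int k * int (fst v) + (1 - int k) * int (snd v)"

definition zk :: "nat \<Rightarrow> nat \<Rightarrow> bool" where
  "zk n k = (k \<le> n + 1 - k)"

text \<open>ds = [d_{k,0}, ..., d_{k,l-1}]; computes d_{k,l}\<close>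
definition dstep :: "nat \<Rightarrow> nat \<Rightarrow> nat list \<Rightarrow> nat \<Rightarrow> nat" where
  "dstep n k ds l =
    (let Os = (\<Sum>j\<in>{j. j \<le> l - 1 \<and> odd j}. ds ! j);
         Es = (\<Sum>j\<in>{j. j \<le> l - 1 \<and> even j}. ds ! j);
         t = (if zk n k then
                (if odd l then (GREATEST m. m * k \<le> (Es + 1) * (n + 1 - k))
                 else (GREATEST m. m * (n + 1 - k) \<le> (Os + 1) * k))
              else
                (if odd l then (GREATEST m. m * (n + 1 - k) \<le> (Es + 1) * k)
                 else (GREATEST m. m * k \<le> (Os + 1) * (n + 1 - k))));
         s = (if l = 1 then 0 else if odd l then Os else Es)
     in min (n - sum_list ds) (t - s))"

fun dseq :: "nat \<Rightarrow> nat \<Rightarrow> nat \<Rightarrow> nat list" where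
  "dseq n k 0 = [0]"
| "dseq n k (Suc l) = (let ds = dseq n k l in ds @ [dstep n k ds (Suc l)])"

definition dk :: "nat \<Rightarrow> nat \<Rightarrow> nat \<Rightarrow> nat" where
  "dk n k l = dseq n k l ! l"

definition rk :: "nat \<Rightarrow> nat \<Rightarrow> nat" where
  "rk n k = (LEAST r. (\<Sum>j\<le>r. dk n k j) = n)"

definition etak :: "nat \<Rightarrow> nat \<Rightarrow> eta" where
  "etak n k = (zk n k, dseq n k (rk n k))"

end

theory Submission
  imports Defs
begin

(* The blocks of eta_k interleave the positive multiples of k and of n + 1 - k in increasing
   order: the odd blocks run through the multiples of one of them, the even blocks through those
   of the other, and each block stops just before the other sequence would come first (this is
   what t_l computes). Consequently f_k(v_j) + r_j = k pi_1(v_j) + (n + 1 - k) pi_2(v_j) is the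
   j-th term M_j of the merged sequence, so k (n + 1 - k) j <= (n + 1) M_j <= k (n + 1 - k) (j + 1).
   Since k (n + 1 - k) >= n, this forces M_l - M_j >= l - j - 1 for j < l <= n, and every point of
   T_0 or of a shifted T_j with j <= l has f_k-value at most M_l + n - l + 1 <= f_k(v). *)

lemma Greatest_mult_le_eq_div:
  fixes a y :: nat
  assumes "0 < a"
  shows "(GREATEST m. m * a \<le> y) = y div a"
proof (rule Greatest_equality)
  show "y div a * a \<le> y" by simp
next
  fix m assume "m * a \<le> y"
  then show "m \<le> y div a" using assms by (simp add: less_eq_div_iff_mult_less_eq)
qed

lemma merged_rank_bounds:
  fixes \<alpha> \<beta> x y m :: nat
  assumes "m = \<alpha> * x" and "\<beta> * y \<le> m" and "m \<le> \<beta> * (y + 1)"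
  shows "\<alpha> * \<beta> * (x + y) \<le> (\<alpha> + \<beta>) * m" and "(\<alpha> + \<beta>) * m \<le> \<alpha> * \<beta> * (x + y + 1)"
proof -
  have split: "(\<alpha> + \<beta>) * m = \<alpha> * m + \<beta> * (\<alpha> * x)" using assms(1) by (simp add: algebra_simps)
  have "\<alpha> * (\<beta> * y) \<le> \<alpha> * m" and "\<alpha> * m \<le> \<alpha> * (\<beta> * (y + 1))"
    using assms(2,3) by simp_all
  then show "\<alpha> * \<beta> * (x + y) \<le> (\<alpha> + \<beta>) * m" and "(\<alpha> + \<beta>) * m \<le> \<alpha> * \<beta> * (x + y + 1)"
    unfolding split by (simp_all add: algebra_simps)
qed

lemma rank_gap:
  fixes N P m m' j l :: nat
  assumes "N \<le> P + 1" and "j < l" and "l \<le> j + N"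
    and "N * m \<le> P * (j + 1)" and "P * l \<le> N * m'"
  shows "l + m \<le> m' + j + 1"
proof -
  define e where "e = l - j - 1"
  have l: "l = j + 1 + e" and "e < N" using assms(2,3) unfolding e_def by linarith+
  then have "N * e < P * e + N" using assms(1) mult_le_mono1[OF assms(1), of e] by simp
  then have "N * (l + m) < N * (j + 1) + P * e + N + P * (j + 1)"
    using assms(4) unfolding l by (simp add: algebra_simps)
  also have "\<dots> = N * (j + 2) + P * l" unfolding l by (simp add: algebra_simps)
  also have "\<dots> \<le> N * (m' + j + 2)" using assms(5) by (simp add: algebra_simps)
  finally show ?thesis by (simp only: mult_less_cancel1) linarith
qed

(* The paper's O_l and E_l, told apart by whether their parity is that of l; this makes the
   recursion for d_{k,l} uniform in l. *)
definition same_parity_sum :: "(nat \<Rightarrow> nat) \<Rightarrow> nat \<Rightarrow> nat" where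
  "same_parity_sum f l = (\<Sum>i | i < l \<and> even i = even l. f i)"

definition other_parity_sum :: "(nat \<Rightarrow> nat) \<Rightarrow> nat \<Rightarrow> nat" where
  "other_parity_sum f l = (\<Sum>i | i < l \<and> even i \<noteq> even l. f i)"

lemma parity_sums_0 [simp]: "same_parity_sum f 0 = 0" "other_parity_sum f 0 = 0"
  by (simp_all add: same_parity_sum_def other_parity_sum_def)

lemma same_parity_sum_Suc: "same_parity_sum f (Suc l) = other_parity_sum f l"
  unfolding same_parity_sum_def other_parity_sum_def
  by (rule sum.cong) (auto simp: less_Suc_eq)

lemma other_parity_sum_Suc: "other_parity_sum f (Suc l) = same_parity_sum f l + f l"
proof -
  have "{i. i < Suc l \<and> even i \<noteq> even (Suc l)} = insert l {i. i < l \<and> even i = even l}"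
    by (auto simp: less_Suc_eq)
  then show ?thesis unfolding same_parity_sum_def other_parity_sum_def by simp
qed

lemma same_plus_other_parity_sum: "same_parity_sum f l + other_parity_sum f l = sum f {..<l}"
  by (induction l) (simp_all add: same_parity_sum_Suc other_parity_sum_Suc)

lemma parity_sum_cong:
  assumes "\<And>i. i < l \<Longrightarrow> f i = g i"
  shows "same_parity_sum f l = same_parity_sum g l" and "other_parity_sum f l = other_parity_sum g l"
  unfolding same_parity_sum_def other_parity_sum_def using assms by (auto intro: sum.cong)

lemma sum_odd_below:
  "(\<Sum>i | i < l \<and> odd i. f i) = (if odd l then same_parity_sum f l else other_parity_sum f l)"
  unfolding same_parity_sum_def other_parity_sum_def by (cases "odd l") (auto intro!: sum.cong)

lemma sum_even_below:
  "(\<Sum>i | i < l \<and> even i. f i) = (if even l then same_parity_sum f l else other_parity_sum f l)"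
  unfolding same_parity_sum_def other_parity_sum_def by (cases "even l") (auto intro!: sum.cong)

lemma length_dseq: "length (dseq n k l) = Suc l"
  by (induction l) (simp_all add: Let_def)

lemma nth_dseq: "j \<le> l \<Longrightarrow> dseq n k l ! j = dk n k j"
proof (induction l)
  case 0
  then show ?case by (simp add: dk_def)
next
  case (Suc l)
  then show ?case
    by (cases "j = Suc l") (simp_all add: dk_def Let_def nth_append length_dseq)
qed

lemma dk_0: "dk n k 0 = 0"
  by (simp add: dk_def)

lemma dk_Suc: "dk n k (Suc l) = dstep n k (dseq n k l) (Suc l)"
  by (simp add: dk_def Let_def nth_append length_dseq)

lemma fk_shift: "fk k (x + s, y + s) = fk k (x, y) + int s"
  by (simp add: fk_def algebra_simps)

lemma fk_T0_le: "u \<in> T0 n \<Longrightarrow> fk k u \<le> int n"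
  by (auto simp: T0_def fk_def algebra_simps)

lemma fk_shifted_block:
  assumes "u \<in> shift (TT n \<eta> j) (rv n \<eta> j)"
  obtains p where "p \<le> n - j" and "fk k u = fk k (vv \<eta> j) + int (rv n \<eta> j) + int p"
proof -
  obtain p where "p \<le> n - j"
    and "u = (fst (vv \<eta> j) + (p + rv n \<eta> j), snd (vv \<eta> j) + (p + rv n \<eta> j))"
    using assms unfolding shift_def TT_def by (auto simp: add.assoc)
  then show thesis
    using that fk_shift[of k "fst (vv \<eta> j)" "p + rv n \<eta> j" "snd (vv \<eta> j)"] by simp
qed

(* The number whose multiples block l of eta_k runs through. *)
definition block_weight :: "nat \<Rightarrow> nat \<Rightarrow> nat \<Rightarrow> nat" where
  "block_weight n k l = (if odd l \<longleftrightarrow> zk n k then k else n + 1 - k)"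

definition level :: "nat \<Rightarrow> nat \<Rightarrow> nat \<Rightarrow> nat" where
  "level n k j = k * fst (vv (etak n k) j) + (n + 1 - k) * snd (vv (etak n k) j)"

lemma fk_vv_plus_rv:
  assumes "k \<le> n + 1"
  shows "fk k (vv (etak n k) j) + int (rv n (etak n k) j) = int (level n k j)"
proof -
  obtain x y where xy: "vv (etak n k) j = (x, y)" by fastforce
  have "int (level n k j) = int k * int x + int (n + 1 - k) * int y"
    by (simp add: level_def xy)
  also have "\<dots> = fk k (x, y) + int (n * y)"
    using assms by (simp add: fk_def of_nat_diff algebra_simps)
  finally show ?thesis by (simp add: rv_def xy)
qed

locale etak_blocks =
  fixes n k :: nat
  assumes k_ge_1: "1 \<le> k" and k_le_n: "k \<le> n"
begin

abbreviation d :: "nat \<Rightarrow> nat" where "d \<equiv> dk n k"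
abbreviation dsum :: "nat \<Rightarrow> nat" where "dsum l \<equiv> sum d {..<l}"
abbreviation same :: "nat \<Rightarrow> nat" where "same \<equiv> same_parity_sum d"
abbreviation other :: "nat \<Rightarrow> nat" where "other \<equiv> other_parity_sum d"
abbreviation w :: "nat \<Rightarrow> nat" where "w \<equiv> block_weight n k"
abbreviation t_max :: "nat \<Rightarrow> nat" where "t_max l \<equiv> w (Suc l) * (other l + 1) div w l"

lemma w_pos: "0 < w l"
  using k_ge_1 k_le_n by (simp add: block_weight_def)

lemma w_Suc_Suc: "w (Suc (Suc l)) = w l"
  by (simp add: block_weight_def)

lemma w_add: "w l + w (Suc l) = n + 1"
  using k_le_n by (simp add: block_weight_def)

lemma w_mult: "w l * w (Suc l) = k * (n + 1 - k)"
  by (simp add: block_weight_def)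

lemma w_1_le_w_2: "w 1 \<le> w 2"
  by (simp add: block_weight_def zk_def numeral_2_eq_2)

lemma dk_eq_min:
  assumes "1 \<le> l"
  shows "d l = min (n - dsum l) (t_max l - same l)"
proof -
  obtain m where l: "l = Suc m" using assms by (cases l) auto
  have prefix: "(\<Sum>j | j \<le> Suc m - 1 \<and> P j. dseq n k m ! j) = (\<Sum>i | i < Suc m \<and> P i. d i)" for P
    by (rule sum.cong) (auto simp: nth_dseq)
  have "sum_list (dseq n k m) = dsum (Suc m)"
    unfolding sum_list_sum_nth length_dseq by (rule sum.cong) (auto simp: nth_dseq)
  moreover have "same 1 = 0"
    by (simp add: same_parity_sum_Suc)
  ultimately show ?thesis
    unfolding l dk_Suc dstep_def Let_def prefix sum_odd_below sum_even_below
    using k_ge_1 k_le_n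
    by (auto simp: block_weight_def Greatest_mult_le_eq_div mult.commute)
qed

lemma dsum_mono: "i \<le> j \<Longrightarrow> dsum i \<le> dsum j"
  by (simp add: sum_mono2)

(* The merge is in order: at the start of block l the next multiple of its own weight comes no
   later than the next multiple of the other weight, and not before the last one used. *)
lemma block_invariant:
  assumes "1 \<le> l" and "dsum l < n"
  shows "w l * (same l + 1) \<le> w (Suc l) * (other l + 1) \<and>
         w (Suc l) * other l \<le> w l * (same l + 1)"
  using assms
proof (induction l rule: nat_induct_at_least)
  case base
  then show ?case
    using w_1_le_w_2 by (simp add: numeral_2_eq_2 same_parity_sum_Suc other_parity_sum_Suc dk_0)
next
  case (Suc l)
  have "dsum l < n" using Suc.prems dsum_mono[of l "Suc l"] by simp
  then have "w l * (same l + 1) \<le> w (Suc l) * (other l + 1)" using Suc.IH by simp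
  then have "same l + 1 \<le> t_max l"
    using w_pos by (simp add: less_eq_div_iff_mult_less_eq mult.commute)
  moreover have "d l < n - dsum l" using Suc.prems by simp
  ultimately have "other (Suc l) = t_max l"
    using dk_eq_min[OF Suc.hyps] by (simp add: other_parity_sum_Suc)
  then show ?case
    using dividend_less_times_div[OF w_pos, of "w (Suc l) * (other l + 1)" l]
    by (simp add: same_parity_sum_Suc w_Suc_Suc)
qed

lemma block_fill:
  assumes "1 \<le> l" and "dsum l < n"
  shows "1 \<le> d l" and "w l * (same l + d l) \<le> w (Suc l) * (other l + 1)"
proof -
  have "w l * (same l + 1) \<le> w (Suc l) * (other l + 1)" using block_invariant[OF assms] by simp
  then have "same l + 1 \<le> t_max l"
    using w_pos by (simp add: less_eq_div_iff_mult_less_eq mult.commute)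
  then have "1 \<le> t_max l - same l" by linarith
  then show "1 \<le> d l" using dk_eq_min[OF assms(1)] assms(2) by simp
  have "same l + d l \<le> t_max l" using dk_eq_min[OF assms(1)] \<open>same l + 1 \<le> t_max l\<close> by simp
  then have "w l * (same l + d l) \<le> w l * t_max l" by simp
  also have "\<dots> \<le> w (Suc l) * (other l + 1)" by simp
  finally show "w l * (same l + d l) \<le> w (Suc l) * (other l + 1)" .
qed

lemma dsum_le_n: "dsum l \<le> n"
proof (induction l)
  case (Suc l)
  have "d l \<le> n - dsum l" using dk_eq_min[of l] by (cases "l = 0") (simp_all add: dk_0)
  then show ?case using Suc.IH by simp
qed simp

lemma dsum_Suc_ge: "min n l \<le> dsum (Suc l)"
proof (induction l)
  case (Suc l)
  then show ?case using block_fill(1)[of "Suc l"] by (cases "dsum (Suc l) < n") auto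
qed simp

lemma rk_spec: "dsum (Suc (rk n k)) = n" "r < rk n k \<Longrightarrow> dsum (Suc r) < n" "1 \<le> rk n k"
proof -
  have sum_eq: "(\<Sum>j\<le>r. d j) = dsum (Suc r)" for r by (simp add: lessThan_Suc_atMost)
  have "dsum (Suc n) = n" using dsum_Suc_ge[of n] dsum_le_n[of "Suc n"] by simp
  then have ex: "\<exists>r. (\<Sum>j\<le>r. d j) = n" unfolding sum_eq by blast
  show S_rk: "dsum (Suc (rk n k)) = n" using LeastI_ex[OF ex] unfolding rk_def sum_eq .
  show "r < rk n k \<Longrightarrow> dsum (Suc r) < n"
    using not_less_Least[of r "\<lambda>r. (\<Sum>j\<le>r. d j) = n"] dsum_le_n[of "Suc r"]
    unfolding rk_def sum_eq by fastforce
  show "1 \<le> rk n k"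
    using S_rk k_ge_1 k_le_n by (cases "rk n k") (simp_all add: dk_0)
qed

lemma dd_etak: "i \<le> rk n k \<Longrightarrow> dd (etak n k) i = d i"
  by (simp add: dd_def etak_def nth_dseq)

lemma tidx_etak:
  assumes "1 \<le> j" and "j \<le> n"
  defines "t \<equiv> tidx (etak n k) j"
  shows "1 \<le> t" and "t \<le> rk n k" and "dsum t < j" and "j \<le> dsum (Suc t)"
proof -
  let ?block = "\<lambda>t. t \<le> rk n k \<and> dsum t < j \<and> j \<le> dsum (Suc t)"
  have "\<exists>t<Suc (rk n k). (\<forall>i\<le>t. \<not> j \<le> dsum i) \<and> j \<le> dsum (Suc t)"
    using assms(1,2) rk_spec(1) by (intro ex_least_nat_less) auto
  then obtain t0 where t0: "?block t0" by (metis le_refl less_Suc_eq_le not_le)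
  have unique: "t' = t0" if "?block t'" for t'
  proof (rule ccontr)
    assume "t' \<noteq> t0"
    then consider "Suc t' \<le> t0" | "Suc t0 \<le> t'" by linarith
    then show False
    proof cases
      case 1
      then show False using dsum_mono[OF 1] t0 that by linarith
    next
      case 2
      then show False using dsum_mono[OF 2] t0 that by linarith
    qed
  qed
  have prefix: "(\<Sum>i<t. dd (etak n k) i) = dsum t" if "t \<le> Suc (rk n k)" for t
    using that by (auto simp: dd_etak intro!: sum.cong)
  have sums: "(\<Sum>i<t. dd (etak n k) i) = dsum t" "(\<Sum>i\<le>t. dd (etak n k) i) = dsum (Suc t)"
    if "t \<le> rk n k" for t
    using that prefix[of t] prefix[of "Suc t"] by (simp_all add: lessThan_Suc_atMost)
  have rr_etak: "rr (etak n k) = rk n k" by (simp add: rr_def etak_def length_dseq)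
  have "tidx (etak n k) j = t0"
    unfolding tidx_def rr_etak
  proof (rule the_equality)
    show "t0 \<le> rk n k \<and> (\<Sum>i<t0. dd (etak n k) i) < j \<and> j \<le> (\<Sum>i\<le>t0. dd (etak n k) i)"
      using t0 sums[of t0] by simp
  next
    fix t' assume "t' \<le> rk n k \<and> (\<Sum>i<t'. dd (etak n k) i) < j \<and> j \<le> (\<Sum>i\<le>t'. dd (etak n k) i)"
    then show "t' = t0" using unique sums[of t'] by simp
  qed
  then show "t \<le> rk n k" "dsum t < j" "j \<le> dsum (Suc t)" using t0 by (simp_all add: t_def)
  show "1 \<le> t"
    using \<open>dsum t < j\<close> \<open>j \<le> dsum (Suc t)\<close> by (cases t) (simp_all add: dk_0)
qed

lemma level_eq:
  assumes "1 \<le> j" and "j \<le> n"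
  defines "t \<equiv> tidx (etak n k) j"
  shows "level n k j = w t * (same t + (j - dsum t))"
proof -
  have "t \<le> rk n k" using tidx_etak(2)[OF assms(1,2)] unfolding t_def .
  then have dd_below: "dd (etak n k) i = d i" if "i < t" for i using that dd_etak by simp
  have "(\<Sum>i<t. dd (etak n k) i) = dsum t"
    using dd_below by (intro sum.cong) auto
  moreover have "same_parity_sum (dd (etak n k)) t = same t"
    and "other_parity_sum (dd (etak n k)) t = other t"
    using parity_sum_cong[of t "dd (etak n k)" d] dd_below by simp_all
  moreover have "fst (etak n k) = zk n k"
    by (simp add: etak_def)
  ultimately show ?thesis
    unfolding level_def vv_def Let_def t_def[symmetric] sum_odd_below sum_even_below
    using k_le_n by (auto simp: block_weight_def)
qed

lemma level_bounds:
  assumes "1 \<le> j" and "j \<le> n"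
  shows "k * (n + 1 - k) * j \<le> (n + 1) * level n k j"
    and "(n + 1) * level n k j \<le> k * (n + 1 - k) * (j + 1)"
proof -
  define t where "t = tidx (etak n k) j"
  define c where "c = j - dsum t"
  have t: "1 \<le> t" "dsum t < j" "j \<le> dsum (Suc t)"
    using tidx_etak[OF assms] unfolding t_def by simp_all
  then have c: "1 \<le> c" "c \<le> d t" and "dsum t < n" using assms(2) unfolding c_def by simp_all
  have j: "j = (same t + c) + other t"
    using t(2) same_plus_other_parity_sum[of d t] unfolding c_def by simp
  have level: "level n k j = w t * (same t + c)"
    using level_eq[OF assms] unfolding t_def c_def .
  have "w (Suc t) * other t \<le> w t * (same t + 1)"
    using block_invariant[OF t(1) \<open>dsum t < n\<close>] by simp
  also have "\<dots> \<le> level n k j" unfolding level using c(1) by (intro mult_le_mono2) simp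
  finally have lower: "w (Suc t) * other t \<le> level n k j" .
  have "level n k j \<le> w t * (same t + d t)" unfolding level using c(2) by simp
  also have "\<dots> \<le> w (Suc t) * (other t + 1)" using block_fill(2)[OF t(1) \<open>dsum t < n\<close>] .
  finally have upper: "level n k j \<le> w (Suc t) * (other t + 1)" .
  show "k * (n + 1 - k) * j \<le> (n + 1) * level n k j"
    and "(n + 1) * level n k j \<le> k * (n + 1 - k) * (j + 1)"
    using merged_rank_bounds[OF level lower upper] unfolding j w_add w_mult by simp_all
qed

lemma n_le_weight_product: "n \<le> k * (n + 1 - k)"
proof -
  obtain b where n: "n = k + b" using k_le_n le_Suc_ex by blast
  obtain a where k: "k = Suc a" using k_ge_1 by (cases k) auto
  show ?thesis unfolding n k by simp
qed

lemma level_gap: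
  assumes "1 \<le> j" and "j \<le> l" and "l \<le> n"
  shows "level n k j + l \<le> level n k l + j + 1"
proof (cases "j = l")
  case False
  then have "j < l" using assms(2) by simp
  then show ?thesis
    using rank_gap[of "n + 1" "k * (n + 1 - k)" j l "level n k j" "level n k l"]
      n_le_weight_product level_bounds(2)[of j] level_bounds(1)[of l] assms
    by simp
qed simp

lemma level_ge:
  assumes "1 \<le> l" and "l \<le> n"
  shows "l \<le> level n k l + 1"
  using rank_gap[of "n + 1" "k * (n + 1 - k)" 0 l 0 "level n k l"]
    n_le_weight_product level_bounds(1)[OF assms] assms
  by simp

end

theorem lemma3p12:
  fixes n k l q :: nat and v :: "nat \<times> nat"
  assumes "n \<ge> 1" and "1 \<le> k" and "k \<le> n" and "1 \<le> l" and "l \<le> n"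
    and "q \<ge> n - l + 1 + rv n (etak n k) l"
    and "v = (fst (vv (etak n k) l) + q, snd (vv (etak n k) l) + q)"
  shows "\<forall>u \<in> T0 n \<union> (\<Union>j\<in>{1..l}. shift (TT n (etak n k) j) (rv n (etak n k) j)).
           fk k v \<ge> fk k u"
proof
  interpret etak_blocks n k using assms(2,3) by unfold_locales
  fix u assume u: "u \<in> T0 n \<union> (\<Union>j\<in>{1..l}. shift (TT n (etak n k) j) (rv n (etak n k) j))"
  have "fk k v = fk k (vv (etak n k) l) + int q"
    unfolding assms(7) fk_shift by simp
  then have v: "int (level n k l) + int n + 1 \<le> fk k v + int l"
    using assms(3,5,6) fk_vv_plus_rv[of k n l] by linarith
  show "fk k u \<le> fk k v"
  proof (cases "u \<in> T0 n")
    case True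
    then show ?thesis using fk_T0_le[of u n k] v level_ge[OF assms(4,5)] by linarith
  next
    case False
    then obtain j where j: "1 \<le> j" "j \<le> l"
      and u_j: "u \<in> shift (TT n (etak n k) j) (rv n (etak n k) j)"
      using u by auto
    obtain p where "p \<le> n - j"
      and "fk k u = fk k (vv (etak n k) j) + int (rv n (etak n k) j) + int p"
      using u_j by (rule fk_shifted_block)
    then show ?thesis
      using v fk_vv_plus_rv[of k n j] level_gap[OF j assms(5)] j assms(3,5) by linarith
  qed
qed

end
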